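(* Let $(\gamma_n)$ be a sequence of positive reals satisfying conditions (C1)–(C7) below, let $\omega>0$ be fixed, and let $a_n$ be defined as below. Then $\arg a_n\to 0$ as $n\to\infty$, and $\arg a_n>0$ for all sufficiently large $n$.
   Context: Let $\Delta_n=\gamma_{n+1}-\gamma_n$, $\Delta^2_n=\Delta_{n+1}-\Delta_n$. Conditions: (C1) $\gamma_n\to\infty$; (C2) $\Delta_n\to0$; (C3) there exist $n_0,m_0$ with $\gamma_{n+m}>\gamma_n$ for all $n\ge n_0$, $m\ge m_0$; (C4) $\sum 1/\gamma_j=\infty$; (C5) some $\kappa>1$ has $\sum\gamma_j^{-\kappa}<\infty$; (C6) $\sum|\Delta_n|/\gamma_n^2<\infty$; (C7) $\sum|\Delta^2_n|/\gamma_n<\infty$. For $n\ge1$, $a_n=-\frac{\omega^2}{2\gamma_{2n-1}\gamma_{2n}}+\frac{\gamma_{2n-1}}{2\gamma_{2n}}+\frac{\gamma_{2n-2}}{2\gamma_{2n-1}}+i\left(\frac{\omega}{2\gamma_{2n-1}}+\frac{\omega\gamma_{2n-2}}{2\gamma_{2n-1}\gamma_{2n}}\right)$, and $\arg$ denotes the principal argument. *)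

theory Defs
  imports "HOL-Analysis.Analysis"
begin

definition Delta :: "(nat \<Rightarrow> real) \<Rightarrow> nat \<Rightarrow> real" where
  "Delta g n = g (Suc n) - g n"

definition Delta2 :: "(nat \<Rightarrow> real) \<Rightarrow> nat \<Rightarrow> real" where
  "Delta2 g n = Delta g (Suc n) - Delta g n"

text \<open>The coefficient a_n, for n \<ge> 1 (indices of the sequence start at 0).\<close>
definition acoef :: "(nat \<Rightarrow> real) \<Rightarrow> real \<Rightarrow> nat \<Rightarrow> complex" where
  "acoef g w n =
     Complex (- (w^2) / (2 * g (2*n-1) * g (2*n)) + g (2*n-1) / (2 * g (2*n))
                + g (2*n-2) / (2 * g (2*n-1)))
             (w / (2 * g (2*n-1)) + w * g (2*n-2) / (2 * g (2*n-1) * g (2*n)))"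

end

theory Submission
  imports Defs
begin

text \<open>Only (C1), (C2) and positivity are needed: they force consecutive ratios
  \<open>\<gamma>(k)/\<gamma>(k+1) \<rightarrow> 1\<close> and \<open>1/\<gamma>(k) \<rightarrow> 0\<close>, so \<open>a\<^sub>n \<rightarrow> 1/2 + 1/2 = 1\<close>, where \<open>Arg\<close> is
  continuous; and for \<open>\<omega>, \<gamma> > 0\<close> the imaginary part of \<open>a\<^sub>n\<close> is positive.\<close>

lemma ratio_Suc_tendsto_1:
  fixes g :: "nat \<Rightarrow> real"
  assumes pos: "\<And>n. g n > 0"
    and inverse_lim: "(\<lambda>n. inverse (g n)) \<longlonglongrightarrow> 0"
    and Delta_lim: "Delta g \<longlonglongrightarrow> 0"
  shows "(\<lambda>n. g n / g (Suc n)) \<longlonglongrightarrow> 1"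
proof -
  have "g n / g (Suc n) = inverse (1 + Delta g n * inverse (g n))" for n
    using pos[of n] pos[of "Suc n"] by (simp add: Delta_def field_simps)
  moreover have "(\<lambda>n. inverse (1 + Delta g n * inverse (g n))) \<longlonglongrightarrow> inverse (1 + 0 * 0)"
    by (intro tendsto_intros Delta_lim inverse_lim) simp
  ultimately show ?thesis by simp
qed

lemma acoef_Suc_eq:
  fixes g :: "nat \<Rightarrow> real"
  assumes pos: "\<And>n. g n > 0"
  shows "acoef g w (Suc n) = Complex
      (- (w^2) / 2 * inverse (g (2*n+1)) * inverse (g (2*n+2))
        + g (2*n+1) / g (2*n+2) / 2 + g (2*n) / g (2*n+1) / 2)
      (w / 2 * inverse (g (2*n+1)) + w / 2 * (g (2*n) / g (2*n+1)) * inverse (g (2*n+2)))"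
proof -
  have "2 * Suc n - 1 = 2*n+1" "2 * Suc n - 2 = 2*n" "2 * Suc n = 2*n+2"
    by auto
  then show ?thesis
    unfolding acoef_def using pos[of "2*n"] pos[of "2*n+1"] pos[of "2*n+2"]
    by (simp add: field_simps)
qed

lemma acoef_tendsto_1:
  fixes g :: "nat \<Rightarrow> real"
  assumes pos: "\<And>n. g n > 0"
    and inverse_lim: "(\<lambda>n. inverse (g n)) \<longlonglongrightarrow> 0"
    and Delta_lim: "Delta g \<longlonglongrightarrow> 0"
  shows "acoef g w \<longlonglongrightarrow> 1"
proof (rule LIMSEQ_imp_Suc)
  have ratio: "(\<lambda>n. g n / g (Suc n)) \<longlonglongrightarrow> 1"
    using assms by (rule ratio_Suc_tendsto_1)
  have mono_odd: "strict_mono (\<lambda>n::nat. 2*n+1)" and mono_even: "strict_mono (\<lambda>n::nat. 2*n)"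
    and mono_even': "strict_mono (\<lambda>n::nat. 2*n+2)"
    by (auto simp: strict_mono_def)
  have "(\<lambda>n. g (2*n+1) / g (2*n+2)) \<longlonglongrightarrow> 1" "(\<lambda>n. g (2*n) / g (2*n+1)) \<longlonglongrightarrow> 1"
    "(\<lambda>n. inverse (g (2*n+1))) \<longlonglongrightarrow> 0" "(\<lambda>n. inverse (g (2*n+2))) \<longlonglongrightarrow> 0"
    using LIMSEQ_subseq_LIMSEQ[OF ratio mono_odd] LIMSEQ_subseq_LIMSEQ[OF ratio mono_even]
      LIMSEQ_subseq_LIMSEQ[OF inverse_lim mono_odd] LIMSEQ_subseq_LIMSEQ[OF inverse_lim mono_even']
    by (simp_all add: o_def)
  then have "(\<lambda>n. acoef g w (Suc n))
      \<longlonglongrightarrow> Complex (- (w^2) / 2 * 0 * 0 + 1/2 + 1/2) (w/2 * 0 + w/2 * 1 * 0)"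
    unfolding acoef_Suc_eq[of g, OF pos] by (intro tendsto_intros) simp_all
  then show "(\<lambda>n. acoef g w (Suc n)) \<longlonglongrightarrow> 1"
    by (simp add: one_complex.code)
qed

lemma Im_acoef_pos:
  fixes g :: "nat \<Rightarrow> real"
  assumes pos: "\<And>n. g n > 0" and "w > 0" and "n \<ge> 1"
  shows "Im (acoef g w n) > 0"
proof -
  obtain m where n: "n = Suc m"
    using \<open>n \<ge> 1\<close> by (cases n) auto
  have "w / 2 * inverse (g (2*m+1)) > 0"
    and "w / 2 * (g (2*m) / g (2*m+1)) * inverse (g (2*m+2)) > 0"
    using pos[of "2*m"] pos[of "2*m+1"] pos[of "2*m+2"] \<open>w > 0\<close> by simp_all
  then show ?thesis
    unfolding n acoef_Suc_eq[of g, OF pos] by simp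
qed

theorem corollary7:
  fixes g :: "nat \<Rightarrow> real" and w :: real
  assumes pos: "\<And>n. g n > 0"
    and w_pos: "w > 0"
    and C1: "filterlim g at_top sequentially"
    and C2: "Delta g \<longlonglongrightarrow> 0"
    and C3: "\<exists>n0 m0. \<forall>n\<ge>n0. \<forall>m\<ge>m0. g (n + m) > g n"
    and C4: "\<not> summable (\<lambda>j. 1 / g j)"
    and C5: "\<exists>\<kappa>>1. summable (\<lambda>j. g j powr (-\<kappa>))"
    and C6: "summable (\<lambda>n. \<bar>Delta g n\<bar> / (g n)^2)"
    and C7: "summable (\<lambda>n. \<bar>Delta2 g n\<bar> / g n)"
  shows "(\<lambda>n. Arg (acoef g w n)) \<longlonglongrightarrow> 0
         \<and> (\<forall>\<^sub>F n in sequentially. Arg (acoef g w n) > 0)"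
proof
  have "acoef g w \<longlonglongrightarrow> 1"
    using pos tendsto_inverse_0_at_top[OF C1] C2 by (rule acoef_tendsto_1)
  then have "(\<lambda>n. Arg (acoef g w n)) \<longlonglongrightarrow> Arg 1"
    by (intro tendsto_Arg) (auto simp: nonpos_Reals_def)
  then show "(\<lambda>n. Arg (acoef g w n)) \<longlonglongrightarrow> 0"
    by simp
  have "Arg (acoef g w n) > 0" if "n \<ge> 1" for n
    using Im_acoef_pos[of g w, OF pos w_pos that] Arg_lt_pi[of "acoef g w n"] by blast
  then show "\<forall>\<^sub>F n in sequentially. Arg (acoef g w n) > 0"
    by (rule eventually_sequentiallyI)
qed

end
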